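(* Assume A2, let $x\in\mathcal I$ and suppose the $x$-threshold word $\pi$ exists. Then (1) if $00$ occurs as a factor of $\pi$, then $\pi=L_n(w)$ for some word $w$ and some $n\ge1$; (2) if $11$ occurs as a factor of $\pi$, then $\pi=R_n(w)$ for some word $w$ and some $n\ge1$.
   Context: Words are finite strings over $\{0,1\}$; $w^\omega$ is the infinite repetition of $w$. Let $\mathcal I\subseteq\mathbb R$ be an interval and $\phi_0,\phi_1:\mathcal I\to\mathcal I$. For a word $w$ put $\phi_w:=\phi_{w_{|w|}}\circ\cdots\circ\phi_{w_1}$ (first letter applied first), $\phi_\epsilon=\mathrm{id}$. Assumption A2: for all $x<y$ in $\mathcal I$ and $k\in\{0,1\}$, $\phi_k(x)<\phi_k(y)$ and $\phi_k(y)-\phi_k(x)<y-x$; moreover $\phi_0,\phi_1$ have fixed points $y_0,y_1\in\mathcal I$ with $y_1<y_0$. The $x$-threshold orbit is the sequence $(x_k)_{k\ge1}$ with $x_1=\phi_1(x)$ and $x_{k+1}=\phi_1(x_k)$ if $x_k\ge x$, $x_{k+1}=\phi_0(x_k)$ if $x_k<x$. The $x$-threshold word is the shortest non-empty finite word $\pi$ such that $x_{k+1}=\phi_{(\pi^\omega)_k}(x_k)$ for all $k\ge1$, when such a word exists. For $p\ge1$, $L_p$ and $R_p$ are the word morphisms (substitutions) determined by $L_p(0)=0^{p+1}1$, $L_p(1)=0^p1$, $R_p(0)=01^p$, $R_p(1)=01^{p+1}$, extended to words by concatenation. *)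

theory Defs
  imports "HOL-Analysis.Analysis" "HOL-Library.Sublist"
begin

text \<open>Words over the alphabet {0,1} are represented as bool lists:
  False stands for the letter 0 and True for the letter 1.\<close>

definition letter_map :: "(real \<Rightarrow> real) \<Rightarrow> (real \<Rightarrow> real) \<Rightarrow> bool \<Rightarrow> real \<Rightarrow> real" where
  "letter_map phi0 phi1 k = (if k then phi1 else phi0)"

definition A2 :: "real set \<Rightarrow> (real \<Rightarrow> real) \<Rightarrow> (real \<Rightarrow> real) \<Rightarrow> bool" where
  "A2 I phi0 phi1 \<longleftrightarrow>
     is_interval I \<and>
     (\<forall>z\<in>I. phi0 z \<in> I) \<and> (\<forall>z\<in>I. phi1 z \<in> I) \<and>
     (\<forall>k. \<forall>a\<in>I. \<forall>b\<in>I. a < b \<longrightarrow>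
         letter_map phi0 phi1 k a < letter_map phi0 phi1 k b \<and>
         letter_map phi0 phi1 k b - letter_map phi0 phi1 k a < b - a) \<and>
     (\<exists>y0\<in>I. \<exists>y1\<in>I. phi0 y0 = y0 \<and> phi1 y1 = y1 \<and> y1 < y0)"

text \<open>The x-threshold orbit, shifted to start at index 0:
  thr_orbit phi0 phi1 x j is x_(j+1) in the paper's notation.\<close>
fun thr_orbit :: "(real \<Rightarrow> real) \<Rightarrow> (real \<Rightarrow> real) \<Rightarrow> real \<Rightarrow> nat \<Rightarrow> real" where
  "thr_orbit phi0 phi1 x 0 = phi1 x"
| "thr_orbit phi0 phi1 x (Suc j) =
     (let z = thr_orbit phi0 phi1 x j in if z \<ge> x then phi1 z else phi0 z)"

text \<open>A non-empty word p fits the orbit if x_(k+1) = phi_((p^omega)_k)(x_k) for all k \<ge> 1.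
  With 0-based indexing, (p^omega)_k = p ! ((k-1) mod length p).\<close>
definition fits_orbit :: "(real \<Rightarrow> real) \<Rightarrow> (real \<Rightarrow> real) \<Rightarrow> real \<Rightarrow> bool list \<Rightarrow> bool" where
  "fits_orbit phi0 phi1 x p \<longleftrightarrow> p \<noteq> [] \<and>
     (\<forall>j. thr_orbit phi0 phi1 x (Suc j) =
            letter_map phi0 phi1 (p ! (j mod length p)) (thr_orbit phi0 phi1 x j))"

definition threshold_word :: "(real \<Rightarrow> real) \<Rightarrow> (real \<Rightarrow> real) \<Rightarrow> real \<Rightarrow> bool list \<Rightarrow> bool" where
  "threshold_word phi0 phi1 x p \<longleftrightarrow> fits_orbit phi0 phi1 x p \<and>
     (\<forall>q. fits_orbit phi0 phi1 x q \<longrightarrow> length p \<le> length q)"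

definition Lmor :: "nat \<Rightarrow> bool list \<Rightarrow> bool list" where
  "Lmor p w = concat (map (\<lambda>b. if b then replicate p False @ [True]
                                   else replicate (p+1) False @ [True]) w)"

definition Rmor :: "nat \<Rightarrow> bool list \<Rightarrow> bool list" where
  "Rmor p w = concat (map (\<lambda>b. if b then False # replicate (p+1) True
                                   else False # replicate p True) w)"

end

theory Submission
  imports Defs
begin

text \<open>
  If \<open>x \<le> \<phi>\<^sub>1 x\<close> or \<open>\<phi>\<^sub>0 x \<le> x\<close> the orbit uses a single letter, so the threshold word
  has length one. Otherwise the orbit stays in \<open>[\<phi>\<^sub>1 x, \<phi>\<^sub>0 x)\<close>, and by contraction it lies
  below \<open>mid = \<phi>\<^sub>1 x + \<phi>\<^sub>0 x - x\<close> after a letter 1 and above \<open>mid\<close> after a letter 0. Hence the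
  two candidate successors of an orbit point differ, so the threshold word is a period of the
  letter sequence of the orbit, and \<open>00\<close> and \<open>11\<close> cannot both occur. Two orbit segments
  driven by the same letters keep their order, which bounds the length of every run of a letter
  by one more than the length of any maximal run of it. All maximal runs of the repeated letter
  therefore have length \<open>n\<close> or \<open>n + 1\<close>, and cutting the word into blocks \<open>0\<^sup>m1\<close>
  (resp. \<open>01\<^sup>m\<close>) writes it as \<open>L\<^sub>n(w)\<close> (resp. \<open>R\<^sub>n(w)\<close>).
\<close>

definition maximal_run :: "(nat \<Rightarrow> 'a) \<Rightarrow> 'a \<Rightarrow> nat \<Rightarrow> nat \<Rightarrow> bool" where
  "maximal_run s b i m \<longleftrightarrow>
     0 < m \<and> (i = 0 \<or> s (i - 1) \<noteq> b) \<and> (\<forall>j<m. s (i + j) = b) \<and> s (i + m) \<noteq> b"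

lemma map_upt_run_prefix:
  assumes "i + m \<le> L" and "\<And>j. j < m \<Longrightarrow> s (i + j) = b"
  shows "map s [i..<L] = replicate m b @ map s [i + m..<L]"
proof -
  have "map s [i..<i + m] = replicate m b"
    using assms(2) by (intro nth_equalityI) auto
  moreover have "[i..<L] = [i..<i + m] @ [i + m..<L]"
    using upt_add_eq_append[of i "i + m" "L - (i + m)"] assms(1) by simp
  ultimately show ?thesis by simp
qed

lemma Lmor_Cons:
  "Lmor n (b # w) = replicate (if b then n else Suc n) False @ True # Lmor n w"
  by (simp add: Lmor_def)

lemma Rmor_Cons:
  "Rmor n (b # w) = False # replicate (if b then Suc n else n) True @ Rmor n w"
  by (simp add: Rmor_def)

lemma map_upt_eq_Lmor:
  fixes s :: "nat \<Rightarrow> bool"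
  assumes "i \<le> L" and "i = 0 \<or> s (i - 1)" and "i = L \<or> s (L - 1)"
    and "\<not> s 0" and no_11: "\<And>j. s j \<Longrightarrow> \<not> s (Suc j)"
    and runs: "\<And>i m. maximal_run s False i m \<Longrightarrow> m = n \<or> m = Suc n"
  shows "\<exists>w. map s [i..<L] = Lmor n w"
  using assms(1-3)
proof (induction "L - i" arbitrary: i rule: less_induct)
  case less
  show ?case
  proof (cases "i = L")
    case True
    then show ?thesis by (intro exI[of _ "[]"]) (simp add: Lmor_def)
  next
    case False
    with less.prems have "i < L" "s (L - 1)" by auto
    have "\<not> s i"
      using less.prems(2) \<open>\<not> s 0\<close> no_11[of "i - 1"] by (cases i) auto
    have "s (i + (L - 1 - i))"
      using \<open>i < L\<close> \<open>s (L - 1)\<close> by simp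
    define m where "m = (LEAST m. s (i + m))"
    have "s (i + m)"
      unfolding m_def by (rule LeastI) fact
    have "m \<le> L - 1 - i"
      unfolding m_def by (rule Least_le) fact
    have zeros: "\<not> s (i + j)" if "j < m" for j
      using not_less_Least[of j "\<lambda>m. s (i + m)"] that unfolding m_def by blast
    have "m \<noteq> 0"
      using \<open>\<not> s i\<close> \<open>s (i + m)\<close> by (cases m) auto
    then have "maximal_run s False i m"
      using less.prems(2) zeros \<open>s (i + m)\<close> by (auto simp: maximal_run_def)
    then have m: "m = n \<or> m = Suc n"
      by (rule runs)
    obtain w where w: "map s [Suc (i + m)..<L] = Lmor n w"
      using less.hyps[of "Suc (i + m)"] \<open>m \<le> L - 1 - i\<close> \<open>i < L\<close> \<open>s (i + m)\<close> less.prems(3)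
      by fastforce
    have "map s [i..<L] = replicate m False @ True # map s [Suc (i + m)..<L]"
      using map_upt_run_prefix[of i m L s False] \<open>m \<le> L - 1 - i\<close> \<open>i < L\<close> zeros \<open>s (i + m)\<close>
      by (simp add: upt_conv_Cons)
    also have "\<dots> = Lmor n ((m = n) # w)"
      using m w by (auto simp: Lmor_Cons)
    finally show ?thesis ..
  qed
qed

lemma map_upt_eq_Rmor:
  fixes s :: "nat \<Rightarrow> bool"
  assumes "i \<le> L" and "i = L \<or> \<not> s i" and "\<not> s L"
    and no_00: "\<And>j. \<not> s j \<Longrightarrow> s (Suc j)"
    and runs: "\<And>i m. maximal_run s True i m \<Longrightarrow> m = n \<or> m = Suc n"
  shows "\<exists>w. map s [i..<L] = Rmor n w"
  using assms(1,2)
proof (induction "L - i" arbitrary: i rule: less_induct)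
  case less
  show ?case
  proof (cases "i = L")
    case True
    then show ?thesis by (intro exI[of _ "[]"]) (simp add: Rmor_def)
  next
    case False
    with less.prems have "i < L" "\<not> s i" by auto
    have "\<not> s (Suc i + (L - Suc i))"
      using \<open>i < L\<close> \<open>\<not> s L\<close> by simp
    define m where "m = (LEAST m. \<not> s (Suc i + m))"
    have "\<not> s (Suc i + m)"
      unfolding m_def by (rule LeastI) fact
    have "m \<le> L - Suc i"
      unfolding m_def by (rule Least_le) fact
    have ones: "s (Suc i + j)" if "j < m" for j
      using not_less_Least[of j "\<lambda>m. \<not> s (Suc i + m)"] that unfolding m_def by blast
    have "m \<noteq> 0"
      using no_00[OF \<open>\<not> s i\<close>] \<open>\<not> s (Suc i + m)\<close> by (cases m) auto
    then have "maximal_run s True (Suc i) m"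
      using \<open>\<not> s i\<close> ones \<open>\<not> s (Suc i + m)\<close> by (auto simp: maximal_run_def)
    then have m: "m = n \<or> m = Suc n"
      by (rule runs)
    obtain w where w: "map s [Suc i + m..<L] = Rmor n w"
      using less.hyps[of "Suc i + m"] \<open>m \<le> L - Suc i\<close> \<open>i < L\<close> \<open>\<not> s (Suc i + m)\<close>
      by fastforce
    have "map s [i..<L] = False # replicate m True @ map s [Suc i + m..<L]"
      using map_upt_run_prefix[of "Suc i" m L s True] \<open>m \<le> L - Suc i\<close> \<open>i < L\<close> ones \<open>\<not> s i\<close>
      by (simp add: upt_conv_Cons)
    also have "\<dots> = Rmor n ((m = Suc n) # w)"
      using m w by (auto simp: Rmor_Cons)
    finally show ?thesis ..
  qed
qed

lemma run_start_exists:
  fixes s :: "nat \<Rightarrow> 'a"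
  assumes "s k = b"
  shows "\<exists>i\<le>k. (i = 0 \<or> s (i - 1) \<noteq> b) \<and> (\<forall>j. i \<le> j \<and> j \<le> k \<longrightarrow> s j = b)"
  using assms
proof (induction k)
  case 0
  then show ?case by auto
next
  case (Suc k)
  show ?case
  proof (cases "s k = b")
    case True
    then obtain i where "i \<le> k" "i = 0 \<or> s (i - 1) \<noteq> b" "\<forall>j. i \<le> j \<and> j \<le> k \<longrightarrow> s j = b"
      using Suc.IH by blast
    then show ?thesis
      using Suc.prems by (intro exI[of _ i]) (auto simp: le_Suc_eq)
  next
    case False
    then show ?thesis
      using Suc.prems by (intro exI[of _ "Suc k"]) (auto simp: le_Suc_eq)
  qed
qed

lemma maximal_run_through:
  assumes "0 < m" and block: "\<And>j. j < m \<Longrightarrow> s (k + j) = b" and "k \<le> t" and "s t \<noteq> b"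
  shows "\<exists>i m'. maximal_run s b i m' \<and> m \<le> m'"
proof -
  obtain i where "i \<le> k" and start: "i = 0 \<or> s (i - 1) \<noteq> b"
    and prefix: "\<forall>j. i \<le> j \<and> j \<le> k \<longrightarrow> s j = b"
    using run_start_exists[of s k b] block[OF \<open>0 < m\<close>] by auto
  have inside: "s (i + j) = b" if "j < k - i + m" for j
  proof (cases "i + j \<le> k")
    case True
    then show ?thesis using prefix by simp
  next
    case False
    then show ?thesis
      using block[of "i + j - k"] that \<open>i \<le> k\<close> by simp
  qed
  have "s (i + (t - i)) \<noteq> b"
    using \<open>s t \<noteq> b\<close> \<open>i \<le> k\<close> \<open>k \<le> t\<close> by simp
  define m' where "m' = (LEAST m'. s (i + m') \<noteq> b)"
  have "s (i + m') \<noteq> b"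
    unfolding m'_def by (rule LeastI) fact
  have "k - i + m \<le> m'"
    using inside \<open>s (i + m') \<noteq> b\<close> by (meson not_le)
  moreover have "\<forall>j<m'. s (i + j) = b"
    using not_less_Least[of _ "\<lambda>m'. s (i + m') \<noteq> b"] unfolding m'_def by blast
  ultimately have "maximal_run s b i m'"
    using start \<open>s (i + m') \<noteq> b\<close> \<open>0 < m\<close> by (auto simp: maximal_run_def)
  then show ?thesis
    using \<open>k - i + m \<le> m'\<close> by (metis le_add2 le_trans)
qed

lemma subset_two_consecutive:
  fixes M :: "nat set"
  assumes close: "\<And>m m'. m \<in> M \<Longrightarrow> m' \<in> M \<Longrightarrow> m' \<le> Suc m" and "m0 \<in> M"
  shows "\<exists>n. M \<subseteq> {n, Suc n} \<and> m0 \<le> Suc n"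
proof (cases "\<exists>m1\<in>M. m1 < m0")
  case True
  then obtain m1 where "m1 \<in> M" "m1 < m0" by blast
  have "M \<subseteq> {m1, Suc m1}"
    using close[OF \<open>m1 \<in> M\<close>] close[OF _ \<open>m0 \<in> M\<close>] close[OF \<open>m1 \<in> M\<close> \<open>m0 \<in> M\<close>] \<open>m1 < m0\<close>
    by (fastforce simp: le_Suc_eq)
  then show ?thesis
    using close[OF \<open>m1 \<in> M\<close> \<open>m0 \<in> M\<close>] by blast
next
  case False
  then have "M \<subseteq> {m0, Suc m0}"
    using close[OF \<open>m0 \<in> M\<close>] by (fastforce simp: le_Suc_eq not_less)
  then show ?thesis by auto
qed

lemma sublist_map_upt_pair:
  assumes "sublist [a, b] (map s [0..<L])"
  shows "\<exists>k. s k = a \<and> s (Suc k) = b"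
proof -
  obtain ps ss where split: "map s [0..<L] = ps @ [a, b] @ ss"
    using assms unfolding sublist_def by blast
  have "length (map s [0..<L]) = length (ps @ [a, b] @ ss)"
    by (simp only: split)
  then have "Suc (length ps) < L"
    by simp
  then show ?thesis
    using arg_cong[OF split, of "\<lambda>u. u ! length ps"] arg_cong[OF split, of "\<lambda>u. u ! Suc (length ps)"]
    by (auto simp: nth_append)
qed

lemma A2_letter_map_less:
  assumes "A2 I phi0 phi1" and "u \<in> I" and "v \<in> I" and "u < v"
  shows "letter_map phi0 phi1 b u < letter_map phi0 phi1 b v"
    and "letter_map phi0 phi1 b v - letter_map phi0 phi1 b u < v - u"
  using assms unfolding A2_def by blast+

lemma A2_letter_map_le:
  assumes "A2 I phi0 phi1" and "u \<in> I" and "v \<in> I" and "u \<le> v"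
  shows "letter_map phi0 phi1 b u \<le> letter_map phi0 phi1 b v"
    and "letter_map phi0 phi1 b v - letter_map phi0 phi1 b u \<le> v - u"
  using A2_letter_map_less[OF assms(1-3), of b] assms(4) by (cases "u = v"; force)+

lemmas A2_phi0_less = A2_letter_map_less[where b = False, unfolded letter_map_def if_False]
lemmas A2_phi1_less = A2_letter_map_less[where b = True, unfolded letter_map_def if_True]
lemmas A2_phi0_le = A2_letter_map_le[where b = False, unfolded letter_map_def if_False]
lemmas A2_phi1_le = A2_letter_map_le[where b = True, unfolded letter_map_def if_True]

lemma thr_orbit_in:
  assumes "A2 I phi0 phi1" and "x \<in> I"
  shows "thr_orbit phi0 phi1 x j \<in> I"
  using assms by (induction j) (auto simp: A2_def Let_def)

lemma fits_orbit_True_if_le_phi1: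
  assumes A2: "A2 I phi0 phi1" and "x \<in> I" and "x \<le> phi1 x"
  shows "fits_orbit phi0 phi1 x [True]"
proof -
  have "x \<le> thr_orbit phi0 phi1 x j" for j
  proof (induction j)
    case 0
    then show ?case using \<open>x \<le> phi1 x\<close> by simp
  next
    case (Suc j)
    then show ?case
      using A2_phi1_le(1)[OF A2 \<open>x \<in> I\<close> thr_orbit_in[OF A2 \<open>x \<in> I\<close>] Suc] \<open>x \<le> phi1 x\<close>
      by (simp add: Let_def)
  qed
  then show ?thesis
    by (simp add: fits_orbit_def letter_map_def Let_def)
qed

lemma fits_orbit_False_if_phi0_le:
  assumes A2: "A2 I phi0 phi1" and "x \<in> I" and "phi1 x < x" and "phi0 x \<le> x"
  shows "fits_orbit phi0 phi1 x [False]"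
proof -
  have below: "thr_orbit phi0 phi1 x j < x" for j
  proof (induction j)
    case 0
    then show ?case using \<open>phi1 x < x\<close> by simp
  next
    case (Suc j)
    then show ?case
      using A2_phi0_less(1)[OF A2 thr_orbit_in[OF A2 \<open>x \<in> I\<close>] \<open>x \<in> I\<close> Suc] \<open>phi0 x \<le> x\<close>
      by (simp add: Let_def)
  qed
  then have "\<not> x \<le> thr_orbit phi0 phi1 x j" for j
    by (simp add: not_le)
  then show ?thesis
    by (simp add: fits_orbit_def letter_map_def Let_def)
qed

lemma threshold_word_no_square_if_fits_letter:
  assumes "threshold_word phi0 phi1 x p" and "fits_orbit phi0 phi1 x [b]"
  shows "\<not> sublist [c, c] p"
proof
  assume "sublist [c, c] p"
  then have "2 \<le> length p"
    using sublist_length_le by fastforce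
  moreover have "length p \<le> 1"
    using assms unfolding threshold_word_def by force
  ultimately show False by simp
qed

locale nondegenerate_orbit =
  fixes I :: "real set" and phi0 phi1 :: "real \<Rightarrow> real" and x :: real
  assumes A2: "A2 I phi0 phi1" and x_in: "x \<in> I"
    and phi1_less: "phi1 x < x" and less_phi0: "x < phi0 x"
begin

abbreviation orb :: "nat \<Rightarrow> real" where
  "orb \<equiv> thr_orbit phi0 phi1 x"

definition letter :: "nat \<Rightarrow> bool" where
  "letter j \<longleftrightarrow> x \<le> orb j"

definition mid :: real where
  "mid = phi1 x + phi0 x - x"

lemma orb_in: "orb j \<in> I"
  using thr_orbit_in[OF A2 x_in] .

lemma orb_Suc: "orb (Suc j) = letter_map phi0 phi1 (letter j) (orb j)"
  by (simp add: letter_def letter_map_def Let_def)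

declare thr_orbit.simps(2) [simp del]

lemma not_letter_0: "\<not> letter 0"
  using phi1_less by (simp add: letter_def)

lemma orb_bounds: "phi1 x \<le> orb j \<and> orb j < phi0 x"
proof (induction j)
  case 0
  then show ?case using phi1_less less_phi0 by simp
next
  case (Suc j)
  show ?case
  proof (cases "letter j")
    case True
    then have "x \<le> orb j" by (simp add: letter_def)
    from A2_phi1_le[OF A2 x_in orb_in this] Suc True phi1_less show ?thesis
      by (simp add: orb_Suc letter_map_def)
  next
    case False
    then have "orb j < x" by (simp add: letter_def)
    from A2_phi0_less[OF A2 orb_in x_in this] Suc False less_phi0 show ?thesis
      by (simp add: orb_Suc letter_map_def)
  qed
qed

lemma orb_after_1: "letter j \<Longrightarrow> orb (Suc j) < mid"
  using A2_phi1_le(2)[OF A2 x_in orb_in, of j] orb_bounds[of j]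
  by (simp add: letter_def orb_Suc letter_map_def mid_def)

lemma orb_after_0: "\<not> letter j \<Longrightarrow> mid < orb (Suc j)"
  using A2_phi0_less(2)[OF A2 orb_in x_in, of j] orb_bounds[of j]
  by (simp add: letter_def orb_Suc letter_map_def mid_def)

lemma other_successor_differs: "letter_map phi0 phi1 (\<not> letter j) (orb j) \<noteq> orb (Suc j)"
proof (cases "letter j")
  case True
  then have "phi0 x \<le> phi0 (orb j)"
    using A2_phi0_le(1)[OF A2 x_in orb_in] by (simp add: letter_def)
  then show ?thesis
    using True orb_after_1[of j] phi1_less by (auto simp: letter_map_def mid_def)
next
  case False
  then have "phi1 (orb j) < phi1 x"
    using A2_phi1_less(1)[OF A2 orb_in x_in] by (simp add: letter_def)
  then show ?thesis
    using False orb_after_0[of j] less_phi0 by (auto simp: letter_map_def mid_def)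
qed

lemma fits_orbit_nth:
  assumes "fits_orbit phi0 phi1 x p"
  shows "p ! (j mod length p) = letter j"
proof (rule ccontr)
  assume "p ! (j mod length p) \<noteq> letter j"
  then have "p ! (j mod length p) = (\<not> letter j)"
    by blast
  then have "orb (Suc j) = letter_map phi0 phi1 (\<not> letter j) (orb j)"
    using assms unfolding fits_orbit_def by simp
  then show False
    using other_successor_differs[of j] by simp
qed

lemma fits_orbit_eq_map_letter:
  "fits_orbit phi0 phi1 x p \<Longrightarrow> p = map letter [0..<length p]"
  by (rule nth_equalityI) (auto simp: fits_orbit_nth[symmetric])

lemma fits_orbit_letter_periodic:
  "fits_orbit phi0 phi1 x p \<Longrightarrow> letter (j + k * length p) = letter j"
  by (metis fits_orbit_nth mod_mult_self1)

lemma not_11_and_00: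
  assumes "letter j" and "letter (Suc j)" and "\<not> letter k" and "\<not> letter (Suc k)"
  shows False
  using orb_after_1[OF assms(1)] orb_after_0[OF assms(3)] assms(2,4) by (simp add: letter_def)

lemma orb_less_same_letters:
  assumes "\<And>j. j < m \<Longrightarrow> letter (i + j) = letter (i' + j)" and "orb i < orb i'"
  shows "orb (i + m) < orb (i' + m)"
  using assms(1)
proof (induction m)
  case 0
  then show ?case using assms(2) by simp
next
  case (Suc m)
  then have "orb (i + m) < orb (i' + m)" by simp
  then show ?case
    using A2_letter_map_less(1)[OF A2 orb_in orb_in] Suc.prems[of m] by (simp add: orb_Suc)
qed

lemma orb_le_same_letters:
  assumes "\<And>j. j < m \<Longrightarrow> letter (i + j) = letter (i' + j)" and "orb i \<le> orb i'"
  shows "orb (i + m) \<le> orb (i' + m)"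
  using assms(1)
proof (induction m)
  case 0
  then show ?case using assms(2) by simp
next
  case (Suc m)
  then have "orb (i + m) \<le> orb (i' + m)" by simp
  then show ?case
    using A2_letter_map_le(1)[OF A2 orb_in orb_in] Suc.prems[of m] by (simp add: orb_Suc)
qed

lemma zero_stretch_le_initial_run:
  assumes run: "maximal_run letter False 0 r" and zeros: "\<And>j. j < m \<Longrightarrow> \<not> letter (i + j)"
  shows "m \<le> r"
proof (rule ccontr)
  assume "\<not> m \<le> r"
  have "orb (0 + r) \<le> orb (i + r)"
  proof (rule orb_le_same_letters)
    show "letter (0 + j) = letter (i + j)" if "j < r" for j
      using run zeros[of j] that \<open>\<not> m \<le> r\<close> by (simp add: maximal_run_def)
    show "orb 0 \<le> orb i"
      using orb_bounds[of i] by simp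
  qed
  moreover have "letter r"
    using run by (simp add: maximal_run_def)
  ultimately have "letter (i + r)"
    by (simp add: letter_def)
  with zeros[of r] \<open>\<not> m \<le> r\<close> show False by simp
qed

lemma zero_stretch_le_Suc_run:
  assumes run: "maximal_run letter False i m" and zeros: "\<And>j. j < m' \<Longrightarrow> \<not> letter (i' + j)"
  shows "m' \<le> Suc m"
proof (rule ccontr)
  assume long: "\<not> m' \<le> Suc m"
  have "orb (i + m) < orb (Suc i' + m)"
  proof (rule orb_less_same_letters)
    show "letter (i + j) = letter (Suc i' + j)" if "j < m" for j
      using run zeros[of "Suc j"] that long by (simp add: maximal_run_def)
    have "orb i < mid"
    proof (cases i)
      case 0
      then show ?thesis using less_phi0 by (simp add: mid_def)
    next
      case (Suc i0)
      then show ?thesis using run orb_after_1[of i0] by (simp add: maximal_run_def)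
    qed
    also have "mid < orb (Suc i')"
      using orb_after_0 zeros[of 0] long by simp
    finally show "orb i < orb (Suc i')" .
  qed
  moreover have "letter (i + m)"
    using run by (simp add: maximal_run_def)
  ultimately have "letter (i' + Suc m)"
    by (simp add: letter_def)
  with zeros[of "Suc m"] long show False by simp
qed

lemma one_stretch_le_Suc_run:
  assumes run: "maximal_run letter True i m" and ones: "\<And>j. j < m' \<Longrightarrow> letter (i' + j)"
  shows "m' \<le> Suc m"
proof (rule ccontr)
  assume long: "\<not> m' \<le> Suc m"
  have "orb (Suc i' + m) < orb (i + m)"
  proof (rule orb_less_same_letters)
    show "letter (Suc i' + j) = letter (i + j)" if "j < m" for j
      using run ones[of "Suc j"] that long by (simp add: maximal_run_def)
    have "orb (Suc i') < mid"
      using orb_after_1 ones[of 0] long by simp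
    also have "mid < orb i"
    proof (cases i)
      case 0
      then show ?thesis using run not_letter_0 by (simp add: maximal_run_def)
    next
      case (Suc i0)
      then show ?thesis using run orb_after_0[of i0] by (simp add: maximal_run_def)
    qed
    finally show "orb (Suc i') < orb i" .
  qed
  moreover have "\<not> letter (i + m)"
    using run by (simp add: maximal_run_def)
  ultimately have "\<not> letter (i' + Suc m)"
    by (simp add: letter_def)
  with ones[of "Suc m"] long show False by simp
qed

lemma initial_zero_run:
  assumes "letter t"
  obtains r where "maximal_run letter False 0 r"
proof
  define r where "r = (LEAST r. letter r)"
  have "letter r"
    unfolding r_def by (rule LeastI) fact
  moreover have "\<not> letter j" if "j < r" for j
    using not_less_Least[of j letter] that unfolding r_def by blast
  ultimately show "maximal_run letter False 0 r"
    using not_letter_0 by (auto simp: maximal_run_def intro: Nat.gr0I)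
qed

lemma zero_run_lengths_consecutive:
  assumes "maximal_run letter False i0 m0"
  obtains n where "{m. \<exists>i. maximal_run letter False i m} \<subseteq> {n, Suc n}" and "m0 \<le> Suc n"
proof -
  have "m' \<le> Suc m" if "maximal_run letter False i m" "maximal_run letter False i' m'" for i m i' m'
    by (rule zero_stretch_le_Suc_run[OF that(1), of _ i']) (use that(2) in \<open>simp add: maximal_run_def\<close>)
  then show ?thesis
    using subset_two_consecutive[of "{m. \<exists>i. maximal_run letter False i m}" m0] assms that by blast
qed

lemma one_run_lengths_consecutive:
  assumes "maximal_run letter True i0 m0"
  obtains n where "{m. \<exists>i. maximal_run letter True i m} \<subseteq> {n, Suc n}" and "m0 \<le> Suc n"
proof -
  have "m' \<le> Suc m" if "maximal_run letter True i m" "maximal_run letter True i' m'" for i m i' m'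
    by (rule one_stretch_le_Suc_run[OF that(1), of _ i']) (use that(2) in \<open>simp add: maximal_run_def\<close>)
  then show ?thesis
    using subset_two_consecutive[of "{m. \<exists>i. maximal_run letter True i m}" m0] assms that by blast
qed

text \<open>A trailing 0 would join the initial zero run of the next period into a longer stretch of 0s.\<close>

lemma fits_orbit_last_letter:
  assumes fits: "fits_orbit phi0 phi1 x p" and "letter t"
  shows "letter (length p - 1)"
proof (rule ccontr)
  assume last_0: "\<not> letter (length p - 1)"
  obtain r where run: "maximal_run letter False 0 r"
    using initial_zero_run \<open>letter t\<close> .
  have "p \<noteq> []"
    using fits by (simp add: fits_orbit_def)
  have "\<not> letter (length p - 1 + j)" if "j < Suc r" for j
  proof (cases j)
    case 0
    then show ?thesis using last_0 by simp
  next
    case (Suc j0)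
    then have "length p - 1 + j = j0 + 1 * length p"
      using \<open>p \<noteq> []\<close> by simp
    moreover have "\<not> letter j0"
      using run Suc that by (simp add: maximal_run_def)
    ultimately show ?thesis
      using fits_orbit_letter_periodic[OF fits, of j0 1] by simp
  qed
  then have "Suc r \<le> r"
    by (rule zero_stretch_le_initial_run[OF run])
  then show False by simp
qed

theorem threshold_word_eq_Lmor:
  assumes tw: "threshold_word phi0 phi1 x p" and "sublist [False, False] p"
  shows "\<exists>w n. n \<ge> 1 \<and> p = Lmor n w"
proof -
  have fits: "fits_orbit phi0 phi1 x p"
    using tw by (simp add: threshold_word_def)
  note p_eq = fits_orbit_eq_map_letter[OF fits]
  obtain k where "\<not> letter k" "\<not> letter (Suc k)"
    using sublist_map_upt_pair[of False False letter "length p"] \<open>sublist [False, False] p\<close> p_eq by auto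
  then have no_11: "\<And>j. letter j \<Longrightarrow> \<not> letter (Suc j)"
    using not_11_and_00 by blast
  have "\<exists>t. letter t"
  proof (rule ccontr)
    assume "\<nexists>t. letter t"
    then have "fits_orbit phi0 phi1 x [False]"
      using orb_Suc by (simp add: fits_orbit_def)
    then show False
      using threshold_word_no_square_if_fits_letter[OF tw] \<open>sublist [False, False] p\<close> by blast
  qed
  then obtain t where "letter t" ..
  obtain r where run_0: "maximal_run letter False 0 r"
    using initial_zero_run \<open>letter t\<close> .
  have "\<not> letter (k + j)" if "j < 2" for j
    using that \<open>\<not> letter k\<close> \<open>\<not> letter (Suc k)\<close> by (auto simp: less_2_cases_iff)
  then have "2 \<le> r"
    by (rule zero_stretch_le_initial_run[OF run_0])
  obtain n where runs: "{m. \<exists>i. maximal_run letter False i m} \<subseteq> {n, Suc n}" and "r \<le> Suc n"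
    using zero_run_lengths_consecutive[OF run_0] .
  have "p \<noteq> []"
    using fits by (simp add: fits_orbit_def)
  then obtain w where "map letter [0..<length p] = Lmor n w"
    using map_upt_eq_Lmor[of 0 "length p" letter n] fits_orbit_last_letter[OF fits \<open>letter t\<close>]
      not_letter_0 no_11 runs by auto
  moreover have "n \<ge> 1"
    using \<open>2 \<le> r\<close> \<open>r \<le> Suc n\<close> by simp
  ultimately show ?thesis
    using p_eq by metis
qed

theorem threshold_word_eq_Rmor:
  assumes tw: "threshold_word phi0 phi1 x p" and "sublist [True, True] p"
  shows "\<exists>w n. n \<ge> 1 \<and> p = Rmor n w"
proof -
  have fits: "fits_orbit phi0 phi1 x p"
    using tw by (simp add: threshold_word_def)
  note p_eq = fits_orbit_eq_map_letter[OF fits]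
  obtain k where "letter k" "letter (Suc k)"
    using sublist_map_upt_pair[of True True letter "length p"] \<open>sublist [True, True] p\<close> p_eq by auto
  then have no_00: "\<And>j. \<not> letter j \<Longrightarrow> letter (Suc j)"
    using not_11_and_00 by blast
  have "p \<noteq> []"
    using fits by (simp add: fits_orbit_def)
  have letter_period: "letter (0 + j * length p) = letter 0" for j
    by (rule fits_orbit_letter_periodic[OF fits])
  have "k \<le> Suc k * length p"
    using \<open>p \<noteq> []\<close> by (cases p) auto
  moreover have "letter (k + j)" if "j < 2" for j
    using that \<open>letter k\<close> \<open>letter (Suc k)\<close> by (auto simp: less_2_cases_iff)
  ultimately obtain i m0 where run: "maximal_run letter True i m0" and "2 \<le> m0"
    using maximal_run_through[of 2 letter k True "Suc k * length p"]
      letter_period[of "Suc k"] not_letter_0 by auto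
  obtain n where runs: "{m. \<exists>i. maximal_run letter True i m} \<subseteq> {n, Suc n}" and "m0 \<le> Suc n"
    using one_run_lengths_consecutive[OF run] .
  obtain w where "map letter [0..<length p] = Rmor n w"
    using map_upt_eq_Rmor[of 0 "length p" letter n] letter_period[of 1] not_letter_0 no_00 runs
    by auto
  moreover have "n \<ge> 1"
    using \<open>2 \<le> m0\<close> \<open>m0 \<le> Suc n\<close> by simp
  ultimately show ?thesis
    using p_eq by metis
qed

end

theorem mainTheorem7:
  fixes I :: "real set" and phi0 phi1 :: "real \<Rightarrow> real" and x :: real and p :: "bool list"
  assumes "A2 I phi0 phi1"
    and "x \<in> I"
    and "threshold_word phi0 phi1 x p"
  shows "(sublist [False, False] p \<longrightarrow> (\<exists>w n. n \<ge> 1 \<and> p = Lmor n w))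
       \<and> (sublist [True, True] p \<longrightarrow> (\<exists>w n. n \<ge> 1 \<and> p = Rmor n w))"
proof (cases "x \<le> phi1 x \<or> phi0 x \<le> x")
  case True
  then obtain b where "fits_orbit phi0 phi1 x [b]"
    using fits_orbit_True_if_le_phi1[OF assms(1,2)] fits_orbit_False_if_phi0_le[OF assms(1,2)]
    by (meson not_le)
  then show ?thesis
    using threshold_word_no_square_if_fits_letter[OF assms(3)] by blast
next
  case False
  then interpret nondegenerate_orbit I phi0 phi1 x
    using assms by unfold_locales auto
  show ?thesis
    using threshold_word_eq_Lmor threshold_word_eq_Rmor assms(3) by blast
qed

end
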